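(* Let $G=(V,E)$ be an undirected graph with $n=|V|$ nodes, and let $L_0 \subseteq V$ be any set of nodes, with $L_1$, $L_2$, $L_{\geq 2}$, $d^+(L_0)$, the reaching attempt, $rs(v)$ and the procedure Sample defined as in the context. Suppose the estimate $\bar\ell_{\geq 2}$ used by Sample satisfies $\bar\ell_{\geq 2} \in [(1-\delta)|L_{\geq 2}|, (1+\delta)|L_{\geq 2}|]$, and that the baseline reachability $rs_0$ used by Sample is the $\varepsilon$-th percentile of the reachability distribution over $L_{\geq 2}$, i.e., at least a $(1-\varepsilon)$ fraction of the nodes $v \in L_{\geq 2}$ satisfy $rs(v) \ge rs_0$. Then the distribution of the node output by Sample is $(\varepsilon + \delta + O((\varepsilon+\delta)^2))$-close to the uniform distribution on $V$ in total variation distance. Furthermore, every node of $G$ is output by Sample with probability at most $(1 + \varepsilon + \delta + O((\varepsilon+\delta)^2))/n$.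
   Context: Layers: given $L_0 \subseteq V$, let $L_1 = \bigcup_{v\in L_0} N(v) \setminus L_0$ (where $N(v)$ is the neighbor set of $v$), let $L_2$ be the set of nodes at distance exactly $2$ from $L_0$, and let $L_{\geq 2} = V \setminus (L_0 \cup L_1)$. Let $G_{\geq 2}$ be the graph with node set $L_{\geq 2}$ whose edges are the edges of $G$ between $L_2$ and $L_{\geq 2}\setminus L_2$ and the edges of $G$ with both endpoints in $L_{\geq 2}\setminus L_2$ (edges with both endpoints in $L_2$ are excluded); for $v \in L_{\geq 2}$, $C(v)$ denotes the connected component of $G_{\geq 2}$ containing $v$. Let $d^+(L_0)$ denote the number of edges between $L_0$ and $L_1$. A single reaching attempt does the following: pick a uniformly random edge between $L_0$ and $L_1$, let $u$ be its $L_1$-endpoint; if $u$ has no neighbor in $L_2$ the attempt fails; otherwise pick a random neighbor $v\in L_2$ of $u$, compute the component $C(v)$ (by BFS), and output a uniformly random node $w \in C(v)$. The procedure Reach repeats attempts until one succeeds and returns its output node together with its reachability score. For $v \in L_{\geq 2}$, the reachability score $rs(v)$ is the value such that a single attempt outputs (reaches) $v$ with probability $rs(v)/d^+(L_0)$. Procedure Sample (with inputs $\bar\ell_{\geq 2}$ and $rs_0>0$): let $\bar n = |L_0| + |L_1| + \bar\ell_{\geq 2}$; with probability $|L_0|/\bar n$ output a uniformly random node of $L_0$; with probability $|L_1|/\bar n$ output a uniformly random node of $L_1$; otherwise repeat: call Reach to get a node $w \in L_{\geq 2}$ and $rs(w)$, and accept and output $w$ with probability $\min(1, rs_0/rs(w))$,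 else repeat. *)

theory Defs
  imports "HOL-Probability.Probability"
begin

definition simple_graph :: "nat set \<Rightarrow> (nat \<Rightarrow> nat \<Rightarrow> bool) \<Rightarrow> bool" where
  "simple_graph V adj \<longleftrightarrow> finite V \<and> (\<forall>x y. adj x y \<longrightarrow> x \<in> V \<and> y \<in> V)
     \<and> (\<forall>x y. adj x y \<longrightarrow> adj y x) \<and> (\<forall>x. \<not> adj x x)"

definition layer1 :: "nat set \<Rightarrow> (nat \<Rightarrow> nat \<Rightarrow> bool) \<Rightarrow> nat set \<Rightarrow> nat set" where
  "layer1 V adj L0 = {u \<in> V. u \<notin> L0 \<and> (\<exists>x\<in>L0. adj x u)}"

definition layer2 :: "nat set \<Rightarrow> (nat \<Rightarrow> nat \<Rightarrow> bool) \<Rightarrow> nat set \<Rightarrow> nat set" where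
  "layer2 V adj L0 = {w \<in> V. w \<notin> L0 \<and> w \<notin> layer1 V adj L0 \<and> (\<exists>u\<in>layer1 V adj L0. adj u w)}"

definition layer_ge2 :: "nat set \<Rightarrow> (nat \<Rightarrow> nat \<Rightarrow> bool) \<Rightarrow> nat set \<Rightarrow> nat set" where
  "layer_ge2 V adj L0 = V - (L0 \<union> layer1 V adj L0)"

definition adj_ge2 :: "nat set \<Rightarrow> (nat \<Rightarrow> nat \<Rightarrow> bool) \<Rightarrow> nat set \<Rightarrow> nat \<Rightarrow> nat \<Rightarrow> bool" where
  "adj_ge2 V adj L0 x y \<longleftrightarrow> x \<in> layer_ge2 V adj L0 \<and> y \<in> layer_ge2 V adj L0 \<and> adj x y
     \<and> \<not> (x \<in> layer2 V adj L0 \<and> y \<in> layer2 V adj L0)"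

definition comp_ge2 :: "nat set \<Rightarrow> (nat \<Rightarrow> nat \<Rightarrow> bool) \<Rightarrow> nat set \<Rightarrow> nat \<Rightarrow> nat set" where
  "comp_ge2 V adj L0 v = {w. (adj_ge2 V adj L0)\<^sup>*\<^sup>* v w}"

definition out_edges :: "nat set \<Rightarrow> (nat \<Rightarrow> nat \<Rightarrow> bool) \<Rightarrow> nat set \<Rightarrow> (nat \<times> nat) set" where
  "out_edges V adj L0 = {(x, u). x \<in> L0 \<and> u \<in> layer1 V adj L0 \<and> adj x u}"

definition dplus :: "nat set \<Rightarrow> (nat \<Rightarrow> nat \<Rightarrow> bool) \<Rightarrow> nat set \<Rightarrow> nat" where
  "dplus V adj L0 = card (out_edges V adj L0)"

(* A single reaching attempt; None = failure, Some w = reaches w *)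
definition attempt :: "nat set \<Rightarrow> (nat \<Rightarrow> nat \<Rightarrow> bool) \<Rightarrow> nat set \<Rightarrow> nat option pmf" where
  "attempt V adj L0 =
     bind_pmf (pmf_of_set (out_edges V adj L0)) (\<lambda>(x, u).
       (let N = {v \<in> layer2 V adj L0. adj u v} in
        if N = {} then return_pmf None
        else bind_pmf (pmf_of_set N) (\<lambda>v. map_pmf Some (pmf_of_set (comp_ge2 V adj L0 v)))))"

definition rs :: "nat set \<Rightarrow> (nat \<Rightarrow> nat \<Rightarrow> bool) \<Rightarrow> nat set \<Rightarrow> nat \<Rightarrow> real" where
  "rs V adj L0 v = real (dplus V adj L0) * pmf (attempt V adj L0) (Some v)"

(* Output distribution of "repeat independent trials p until one succeeds (Some w),
   output w": the distribution of a trial conditioned on success. *)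
definition repeat_until_success :: "'b option pmf \<Rightarrow> 'b pmf" where
  "repeat_until_success p = map_pmf the (cond_pmf p {x. x \<noteq> None})"

definition reach :: "nat set \<Rightarrow> (nat \<Rightarrow> nat \<Rightarrow> bool) \<Rightarrow> nat set \<Rightarrow> nat pmf" where
  "reach V adj L0 = repeat_until_success (attempt V adj L0)"

definition sample :: "nat set \<Rightarrow> (nat \<Rightarrow> nat \<Rightarrow> bool) \<Rightarrow> nat set \<Rightarrow> real \<Rightarrow> real \<Rightarrow> nat pmf" where
  "sample V adj L0 lbar rs0 =
     (let L1 = layer1 V adj L0;
          nbar = real (card L0) + real (card L1) + lbar
      in bind_pmf (pmf_of_list [(0::nat, real (card L0) / nbar), (1, real (card L1) / nbar), (2, lbar / nbar)])
           (\<lambda>i. if i = 0 then pmf_of_set L0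
                else if i = 1 then pmf_of_set L1
                else repeat_until_success
                       (bind_pmf (reach V adj L0) (\<lambda>w.
                          map_pmf (\<lambda>b. if b then Some w else None)
                            (bernoulli_pmf (min 1 (rs0 / rs V adj L0 w)))))))"

definition tv_dist :: "'b pmf \<Rightarrow> 'b pmf \<Rightarrow> real" where
  "tv_dist p q = (1/2) * infsum (\<lambda>x. \<bar>pmf p x - pmf q x\<bar>) UNIV"

end

theory Submission
  imports Defs
begin

(* Sample outputs each node of L0 and L1 with probability exactly 1/n', where
   n' = |L0| + |L1| + lbar >= (1 - delta) n.  On L>=2, Reach proposes w with probability
   proportional to rs(w) and w is then accepted with probability min(1, rs0/rs(w)), so the
   accepted weight of w is proportional to min(rs(w), rs0).  This weight is maximal on the
   at least (1 - eps) |L>=2| nodes with rs >= rs0, so no node of L>=2 is output with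
   probability above (lbar/n') / ((1 - eps) |L>=2|) <= (1 + delta) / ((1 - eps) n).
   For eps + delta <= 1/2 both bounds are at most K/n with K = 1 + eps + delta + 2 (eps + delta)^2,
   and a distribution on V bounded pointwise by K/n is within total variation K - 1 of uniform. *)

lemma pmf_repeat_until_success:
  assumes "Some y \<in> set_pmf p"
  shows "pmf (repeat_until_success p) x = pmf p (Some x) / measure p {z. z \<noteq> None}"
proof -
  let ?S = "{z. z \<noteq> None}"
  let ?c = "cond_pmf p ?S"
  have ne: "set_pmf p \<inter> ?S \<noteq> {}" using assms by blast
  have "pmf (repeat_until_success p) x = measure ?c (the -` {x} \<inter> set_pmf ?c)"
    unfolding repeat_until_success_def pmf_map measure_Int_set_pmf ..
  also have "the -` {x} \<inter> set_pmf ?c = {Some x} \<inter> set_pmf ?c"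
    using set_cond_pmf[OF ne] by auto
  also have "measure ?c \<dots> = pmf ?c (Some x)"
    by (simp add: measure_Int_set_pmf measure_pmf_single)
  finally show ?thesis using pmf_cond[OF ne] by simp
qed

definition accept_pmf :: "'a pmf \<Rightarrow> ('a \<Rightarrow> real) \<Rightarrow> 'a option pmf" where
  "accept_pmf R q =
     bind_pmf R (\<lambda>w. map_pmf (\<lambda>b. if b then Some w else None) (bernoulli_pmf (q w)))"

lemma pmf_accept_pmf_Some:
  assumes "0 \<le> q x" "q x \<le> 1"
  shows "pmf (accept_pmf R q) (Some x) = pmf R x * q x"
proof -
  have "pmf (map_pmf (\<lambda>b. if b then Some w else None) (bernoulli_pmf (q w))) (Some x)
        = (if w = x then q x else 0)" for w
  proof -
    have "{b. b} = {True}" by auto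
    then show ?thesis using assms by (simp add: pmf_map vimage_def measure_pmf_single)
  qed
  then show ?thesis
    unfolding accept_pmf_def pmf_bind
    by (subst integral_measure_pmf_real[where A = "{x}"]) (auto split: if_splits)
qed

lemma pmf_rejection_sampling_le:
  fixes c :: real
  assumes A: "finite A" "A \<noteq> {}" and c: "c > 0"
    and q: "\<And>w. 0 \<le> q w" "\<And>w. q w \<le> 1"
    and accepted: "\<And>w. w \<in> A \<Longrightarrow> c \<le> pmf R w * q w"
  shows "pmf (repeat_until_success (accept_pmf R q)) x \<le> pmf R x * q x / (real (card A) * c)"
proof -
  let ?P = "accept_pmf R q"
  have P: "pmf ?P (Some w) = pmf R w * q w" for w
    using q by (rule pmf_accept_pmf_Some)
  obtain u where "u \<in> A" using A by blast
  then have "pmf ?P (Some u) > 0" using accepted[of u] c unfolding P by linarith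
  then have u: "Some u \<in> set_pmf ?P" by (simp add: set_pmf_iff)
  have "real (card A) * c = (\<Sum>w\<in>A. c)" by simp
  also have "\<dots> \<le> (\<Sum>w\<in>A. pmf ?P (Some w))" using accepted unfolding P by (rule sum_mono)
  also have "\<dots> = measure ?P (Some ` A)"
    using A by (simp add: measure_measure_pmf_finite sum.reindex)
  also have "\<dots> \<le> measure ?P {z. z \<noteq> None}"
    by (rule measure_pmf.finite_measure_mono) auto
  finally have success: "real (card A) * c \<le> measure ?P {z. z \<noteq> None}" .
  have "real (card A) * c > 0" using A c by (simp add: card_gt_0_iff)
  then show ?thesis
    unfolding pmf_repeat_until_success[OF u] P
    using success q by (intro divide_left_mono) auto
qed

lemma tv_dist_pmf_of_set_le:
  assumes V: "finite V" and supp: "set_pmf p \<subseteq> V"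
    and le: "\<And>x. x \<in> V \<Longrightarrow> pmf p x \<le> K / card V"
  shows "tv_dist p (pmf_of_set V) \<le> K - 1"
proof -
  define n where "n = real (card V)"
  have "V \<noteq> {}" using supp set_pmf_not_empty[of p] by blast
  then have n: "n > 0" using V by (simp add: n_def card_gt_0_iff)
  have total: "(\<Sum>x\<in>V. pmf p x) = 1" using V supp by (rule sum_pmf_eq_1)
  have "(\<Sum>x\<in>V. pmf p x) \<le> (\<Sum>x\<in>V. K / n)" using le unfolding n_def by (rule sum_mono)
  then have K: "1 \<le> K" using total n by (simp add: n_def)
  have unif: "pmf (pmf_of_set V) x = indicator V x / n" for x
    using V \<open>V \<noteq> {}\<close> by (simp add: n_def)
  have "infsum (\<lambda>x. \<bar>pmf p x - pmf (pmf_of_set V) x\<bar>) UNIV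
        = (\<Sum>x\<in>V. \<bar>pmf p x - 1 / n\<bar>)"
    using V supp by (subst infsum_cong_neutral[where T = V]) (auto simp: unif set_pmf_eq)
  \<comment> \<open>\<open>|t| = 2 max t 0 - t\<close>, and the positive parts are at most \<open>(K - 1) / n\<close>\<close>
  also have "\<dots> \<le> (\<Sum>x\<in>V. 2 * ((K - 1) / n) - (pmf p x - 1 / n))"
  proof (rule sum_mono)
    fix x assume "x \<in> V"
    then have "pmf p x - 1 / n \<le> (K - 1) / n"
      using le by (simp add: n_def diff_divide_distrib)
    moreover have "0 \<le> (K - 1) / n" using K n by simp
    ultimately show "\<bar>pmf p x - 1 / n\<bar> \<le> 2 * ((K - 1) / n) - (pmf p x - 1 / n)"
      by linarith
  qed
  also have "\<dots> = 2 * (K - 1)"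
    using n total by (simp add: sum_subtractf n_def)
  finally show ?thesis unfolding tv_dist_def by simp
qed

lemma one_plus_divide_one_minus_le:
  fixes e d :: real
  assumes "0 \<le> e" "0 \<le> d" "e + d \<le> 1/2"
  shows "(1 + d) / (1 - e) \<le> 1 + e + d + 2 * (e + d)\<^sup>2"
proof -
  have "e * e + e * d \<le> (e + d)\<^sup>2" using assms by (simp add: power2_eq_square algebra_simps)
  moreover have "1 * (e + d)\<^sup>2 \<le> 2 * (1 - e) * (e + d)\<^sup>2"
    using assms by (intro mult_right_mono) auto
  ultimately have "1 + d \<le> (1 + e + d + 2 * (e + d)\<^sup>2) * (1 - e)"
    by (simp add: algebra_simps)
  then show ?thesis using assms by (simp add: divide_le_eq)
qed

lemma inverse_le_error_factor:
  fixes e d n nb :: real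
  assumes "0 \<le> e" "0 \<le> d" "e + d \<le> 1/2" "0 < n" "(1 - d) * n \<le> nb"
  shows "1 / nb \<le> (1 + e + d + 2 * (e + d)\<^sup>2) / n"
proof -
  have "0 < (1 - d) * n" using assms by simp
  moreover have "0 < nb" using calculation assms by linarith
  ultimately have "1 / nb \<le> 1 / ((1 - d) * n)"
    using assms mult_pos_pos by (intro divide_left_mono) auto
  also have "\<dots> \<le> (1 + e) / (1 - d) / n" using assms by (simp add: divide_right_mono)
  also have "\<dots> \<le> (1 + e + d + 2 * (e + d)\<^sup>2) / n"
    using one_plus_divide_one_minus_le[of d e] assms
    by (intro divide_right_mono) (simp_all add: add_ac)
  finally show ?thesis .
qed

lemma mixture_share_le:
  fixes e d c m l a :: real
  assumes "0 \<le> e" "0 \<le> d" "e + d \<le> 1/2" "0 \<le> c" "0 < m"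
    and "0 \<le> l" "l \<le> (1 + d) * m" "(1 - e) * m \<le> a"
  shows "l / a / (c + l) \<le> (1 + e + d + 2 * (e + d)\<^sup>2) / (c + m)"
proof (cases "l = 0")
  case False
  then have "0 < l" "0 < (1 - e) * m" using assms by simp_all
  then have "0 < a" using assms by linarith
  have "l * c \<le> (1 + d) * m * c" using assms by (intro mult_right_mono) auto
  moreover have "0 \<le> d * m * l" using assms by simp
  ultimately have "l * (c + m) \<le> (1 + d) * m * (c + l)" by (simp add: algebra_simps)
  then have "l / (c + l) \<le> (1 + d) * m / (c + m)"
    using assms \<open>0 < l\<close> by (simp add: field_simps)
  moreover have "1 / a \<le> 1 / ((1 - e) * m)"
    using \<open>0 < (1 - e) * m\<close> \<open>0 < a\<close> assms by (intro divide_left_mono) auto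
  ultimately have "l / (c + l) * (1 / a) \<le> (1 + d) * m / (c + m) * (1 / ((1 - e) * m))"
    using assms \<open>0 < l\<close> \<open>0 < a\<close> by (intro mult_mono) auto
  also have "\<dots> = (1 + d) * m / ((1 - e) * (c + m) * m)" by (simp add: ac_simps)
  also have "\<dots> = (1 + d) / (1 - e) / (c + m)"
    using \<open>0 < m\<close> by (subst nonzero_mult_divide_mult_cancel_right) simp_all
  also have "\<dots> \<le> (1 + e + d + 2 * (e + d)\<^sup>2) / (c + m)"
    using one_plus_divide_one_minus_le assms by (intro divide_right_mono) simp_all
  finally show ?thesis by (simp add: mult.commute)
qed (use assms in simp)

lemma card_layers:
  assumes "simple_graph V adj" "L0 \<subseteq> V"
  shows "card V = card L0 + card (layer1 V adj L0) + card (layer_ge2 V adj L0)"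
proof -
  have "finite V" using assms(1) by (simp add: simple_graph_def)
  have "V = (L0 \<union> layer1 V adj L0) \<union> layer_ge2 V adj L0"
    using assms(2) by (auto simp: layer1_def layer_ge2_def)
  also have "card \<dots> = card (L0 \<union> layer1 V adj L0) + card (layer_ge2 V adj L0)"
    using \<open>finite V\<close> assms(2)
    by (intro card_Un_disjoint) (auto simp: layer1_def layer_ge2_def intro: finite_subset)
  also have "card (L0 \<union> layer1 V adj L0) = card L0 + card (layer1 V adj L0)"
    using \<open>finite V\<close> assms(2)
    by (intro card_Un_disjoint) (auto simp: layer1_def intro: finite_subset)
  finally show ?thesis .
qed

lemma comp_ge2_subset_layer_ge2:
  assumes "v \<in> layer_ge2 V adj L0"
  shows "comp_ge2 V adj L0 v \<subseteq> layer_ge2 V adj L0"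
proof
  fix w assume "w \<in> comp_ge2 V adj L0 v"
  then have "(adj_ge2 V adj L0)\<^sup>*\<^sup>* v w" by (simp add: comp_ge2_def)
  then show "w \<in> layer_ge2 V adj L0"
    by (induction rule: rtranclp_induct) (auto simp: assms adj_ge2_def)
qed

lemma set_pmf_attempt:
  assumes "simple_graph V adj"
  shows "set_pmf (attempt V adj L0) \<subseteq> insert None (Some ` layer_ge2 V adj L0)"
proof
  fix z assume "z \<in> set_pmf (attempt V adj L0)"
  then obtain u where z: "z \<in> set_pmf (let N = {v \<in> layer2 V adj L0. adj u v} in
      if N = {} then return_pmf None
      else pmf_of_set N \<bind> (\<lambda>v. map_pmf Some (pmf_of_set (comp_ge2 V adj L0 v))))"
    by (auto simp: attempt_def)
  define N where "N = {v \<in> layer2 V adj L0. adj u v}"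
  show "z \<in> insert None (Some ` layer_ge2 V adj L0)"
  proof (cases "N = {}")
    case True
    then show ?thesis using z by (simp add: N_def)
  next
    case False
    have "finite V" using assms by (simp add: simple_graph_def)
    then have "finite N" by (rule finite_subset[rotated]) (auto simp: N_def layer2_def)
    then obtain v where v: "v \<in> N"
      and zv: "z \<in> set_pmf (map_pmf Some (pmf_of_set (comp_ge2 V adj L0 v)))"
      using z False by (auto simp: N_def[symmetric])
    have "v \<in> layer_ge2 V adj L0" using v by (auto simp: N_def layer2_def layer_ge2_def)
    then have comp: "comp_ge2 V adj L0 v \<subseteq> layer_ge2 V adj L0"
      by (rule comp_ge2_subset_layer_ge2)
    moreover have "finite (comp_ge2 V adj L0 v)"
      using comp \<open>finite V\<close> unfolding layer_ge2_def by (rule finite_subset[OF _ finite_Diff])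
    moreover have "comp_ge2 V adj L0 v \<noteq> {}" by (auto simp: comp_ge2_def)
    ultimately show ?thesis using zv by auto
  qed
qed

definition sample_ge2 :: "nat set \<Rightarrow> (nat \<Rightarrow> nat \<Rightarrow> bool) \<Rightarrow> nat set \<Rightarrow> real \<Rightarrow> nat pmf" where
  "sample_ge2 V adj L0 rs0 =
     repeat_until_success (accept_pmf (reach V adj L0) (\<lambda>w. min 1 (rs0 / rs V adj L0 w)))"

lemma pmf_reach:
  assumes "0 < rs V adj L0 u"
  shows "pmf (reach V adj L0) w
    = rs V adj L0 w / (real (dplus V adj L0) * measure (attempt V adj L0) {z. z \<noteq> None})"
proof -
  have "Some u \<in> set_pmf (attempt V adj L0)" and "0 < dplus V adj L0"
    using assms by (auto simp: rs_def zero_less_mult_iff set_pmf_iff)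
  then show ?thesis by (simp add: reach_def pmf_repeat_until_success rs_def)
qed

lemma pmf_sample_ge2_le:
  fixes rs0 :: real
  assumes graph: "simple_graph V adj" and "rs0 > 0"
    and A: "finite A" "A \<noteq> {}" "\<And>v. v \<in> A \<Longrightarrow> rs0 \<le> rs V adj L0 v"
  shows "pmf (sample_ge2 V adj L0 rs0) x \<le> (if x \<in> layer_ge2 V adj L0 then 1 / card A else 0)"
proof -
  define d where "d = real (dplus V adj L0)"
  define s where "s = measure (attempt V adj L0) {z. z \<noteq> None}"
  define q where "q = (\<lambda>w. min 1 (rs0 / rs V adj L0 w))"
  have rs_nonneg: "0 \<le> rs V adj L0 w" for w by (simp add: rs_def)
  obtain u where "u \<in> A" using A by blast
  then have "rs V adj L0 u > 0" using A(3) \<open>rs0 > 0\<close> by force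
  then have "d > 0" and "Some u \<in> set_pmf (attempt V adj L0)"
    by (auto simp: rs_def d_def zero_less_mult_iff set_pmf_iff)
  then have "s > 0" unfolding s_def by (intro measure_pmf_posI) auto
  have reach: "pmf (reach V adj L0) w = rs V adj L0 w / (d * s)" for w
    unfolding d_def s_def by (rule pmf_reach) fact
  \<comment> \<open>acceptance caps every weight at \<open>rs0 / (d * s)\<close>, and the cap is attained on \<open>A\<close>\<close>
  have weight: "pmf (reach V adj L0) w * q w = min (rs V adj L0 w) rs0 / (d * s)" for w
    using rs_nonneg[of w] \<open>rs0 > 0\<close> by (auto simp: reach q_def min_def field_simps)
  have "pmf (sample_ge2 V adj L0 rs0) x \<le> pmf (reach V adj L0) x * q x / (card A * (rs0 / (d * s)))"
    unfolding sample_ge2_def q_def[symmetric]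
  proof (rule pmf_rejection_sampling_le)
    show "0 < rs0 / (d * s)" using \<open>rs0 > 0\<close> \<open>d > 0\<close> \<open>s > 0\<close> by simp
    show "0 \<le> q w" "q w \<le> 1" for w using rs_nonneg[of w] \<open>rs0 > 0\<close> by (simp_all add: q_def)
    show "rs0 / (d * s) \<le> pmf (reach V adj L0) w * q w" if "w \<in> A" for w
      using A(3)[OF that] by (simp add: weight)
  qed (use A in auto)
  also have "\<dots> = min (rs V adj L0 x) rs0 / rs0 * (1 / card A)"
    unfolding weight using \<open>d > 0\<close> \<open>s > 0\<close> by (simp add: field_simps)
  also have "\<dots> \<le> (if x \<in> layer_ge2 V adj L0 then 1 / card A else 0)"
  proof (cases "x \<in> layer_ge2 V adj L0")
    case True
    have "min (rs V adj L0 x) rs0 / rs0 \<le> 1" using \<open>rs0 > 0\<close> by (simp add: divide_le_eq)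
    then have "min (rs V adj L0 x) rs0 / rs0 * (1 / card A) \<le> 1 * (1 / card A)"
      by (rule mult_right_mono) simp
    with True show ?thesis by simp
  next
    case False
    then have "Some x \<notin> set_pmf (attempt V adj L0)" using set_pmf_attempt[OF graph] by auto
    then show ?thesis using False \<open>rs0 > 0\<close> by (simp add: rs_def set_pmf_iff)
  qed
  finally show ?thesis .
qed

lemma pmf_sample:
  fixes V L0 :: "nat set" and adj and lbar rs0 :: real
  defines "nbar \<equiv> real (card L0) + real (card (layer1 V adj L0)) + lbar"
  assumes graph: "simple_graph V adj" and "L0 \<subseteq> V" and "0 \<le> lbar" "0 < nbar"
  shows "pmf (sample V adj L0 lbar rs0) x
    = (indicator L0 x + indicator (layer1 V adj L0) x + lbar * pmf (sample_ge2 V adj L0 rs0) x) / nbar"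
proof -
  let ?L1 = "layer1 V adj L0"
  let ?ws = "[(0::nat, real (card L0) / nbar), (1, real (card ?L1) / nbar), (2, lbar / nbar)]"
  have "finite V" using graph by (simp add: simple_graph_def)
  then have fin: "finite L0" "finite ?L1"
    using \<open>L0 \<subseteq> V\<close> by (auto simp: layer1_def intro: finite_subset)
  have uniform: "pmf (pmf_of_set S) x * real (card S) = indicator S x" if "finite S" for S :: "nat set"
    using that by (cases "S = {}") (auto simp: indicator_def card_gt_0_iff)
  have wf: "pmf_of_list_wf ?ws"
    using \<open>0 \<le> lbar\<close> \<open>0 < nbar\<close> by (intro pmf_of_list_wfI) (auto simp: nbar_def add_divide_distrib[symmetric])
  have "set_pmf (pmf_of_list ?ws) \<subseteq> {0, 1, 2}" using set_pmf_of_list[OF wf] by auto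
  then show ?thesis
    unfolding sample_def Let_def nbar_def[symmetric] pmf_bind
    by (subst integral_measure_pmf_real[where A = "{0, 1, 2}"])
      (use wf uniform[OF fin(1)] uniform[OF fin(2)] in
        \<open>auto simp: pmf_pmf_of_list sample_ge2_def accept_pmf_def add_divide_distrib\<close>)
qed

lemma pmf_sample_le_layers:
  fixes V L0 :: "nat set" and adj and lbar rs0 :: real
  defines "nbar \<equiv> real (card L0) + real (card (layer1 V adj L0)) + lbar"
    and "A \<equiv> {v \<in> layer_ge2 V adj L0. rs0 \<le> rs V adj L0 v}"
  assumes graph: "simple_graph V adj" and "L0 \<subseteq> V" and "0 \<le> lbar" "0 < nbar" "0 < rs0"
    and accepted: "A \<noteq> {} \<or> lbar = 0"
    \<comment> \<open>for \<open>A = {}\<close> the rejection loop may never accept and \<open>sample_ge2\<close> is unspecified\<close>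
  shows "pmf (sample V adj L0 lbar rs0) x \<le>
    (if x \<in> L0 \<union> layer1 V adj L0 then 1 else if x \<in> layer_ge2 V adj L0 then lbar / card A else 0) / nbar"
proof -
  have "finite V" using graph by (simp add: simple_graph_def)
  then have "finite A" by (auto simp: A_def layer_ge2_def)
  have ge2: "lbar * pmf (sample_ge2 V adj L0 rs0) x \<le> (if x \<in> layer_ge2 V adj L0 then lbar / card A else 0)"
  proof (cases "lbar = 0")
    case False
    then have "A \<noteq> {}" using accepted by blast
    with graph \<open>0 < rs0\<close> \<open>finite A\<close> have
      "pmf (sample_ge2 V adj L0 rs0) x \<le> (if x \<in> layer_ge2 V adj L0 then 1 / card A else 0)"
      by (rule pmf_sample_ge2_le) (simp add: A_def)
    then show ?thesis
      using mult_left_mono[OF _ \<open>0 \<le> lbar\<close>, of "pmf (sample_ge2 V adj L0 rs0) x" "1 / card A"]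
      by (auto split: if_splits)
  qed simp
  have ge2_zero: "lbar * pmf (sample_ge2 V adj L0 rs0) x = 0" if "x \<notin> layer_ge2 V adj L0"
    using ge2 that mult_nonneg_nonneg[OF \<open>0 \<le> lbar\<close> pmf_nonneg, of "sample_ge2 V adj L0 rs0" x]
    by simp
  have sample: "pmf (sample V adj L0 lbar rs0) x = (indicator L0 x + indicator (layer1 V adj L0) x
      + lbar * pmf (sample_ge2 V adj L0 rs0) x) / nbar"
    unfolding nbar_def by (rule pmf_sample) (use assms in \<open>simp_all add: nbar_def\<close>)
  consider "x \<in> L0" | "x \<in> layer1 V adj L0" | "x \<in> layer_ge2 V adj L0" | "x \<notin> V"
    by (auto simp: layer_ge2_def)
  then show ?thesis
  proof cases
    case 1
    then have "x \<notin> layer1 V adj L0" "x \<notin> layer_ge2 V adj L0" by (simp_all add: layer1_def layer_ge2_def)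
    then show ?thesis using 1 by (simp add: sample ge2_zero)
  next
    case 2
    then have "x \<notin> L0" "x \<notin> layer_ge2 V adj L0" by (simp_all add: layer1_def layer_ge2_def)
    then show ?thesis using 2 by (simp add: sample ge2_zero)
  next
    case 3
    then have "x \<notin> L0" "x \<notin> layer1 V adj L0" by (simp_all add: layer_ge2_def)
    then show ?thesis using 3 divide_right_mono[OF ge2, of nbar] \<open>0 < nbar\<close> by (simp add: sample)
  next
    case 4
    then have "x \<notin> L0" "x \<notin> layer1 V adj L0" "x \<notin> layer_ge2 V adj L0"
      using \<open>L0 \<subseteq> V\<close> by (auto simp: layer1_def layer_ge2_def)
    then show ?thesis using 4 by (simp add: sample ge2_zero)
  qed
qed

lemma pmf_sample_le:
  fixes V L0 :: "nat set" and adj and e d lbar rs0 :: real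
  assumes graph: "simple_graph V adj" and "V \<noteq> {}" "L0 \<subseteq> V"
    and "0 \<le> e" "0 \<le> d" "e + d \<le> 1/2"
    and lbar: "(1 - d) * card (layer_ge2 V adj L0) \<le> lbar" "lbar \<le> (1 + d) * card (layer_ge2 V adj L0)"
    and "0 < rs0"
    and percentile: "(1 - e) * card (layer_ge2 V adj L0) \<le> card {v \<in> layer_ge2 V adj L0. rs0 \<le> rs V adj L0 v}"
  shows "pmf (sample V adj L0 lbar rs0) x \<le> (if x \<in> V then (1 + e + d + 2 * (e + d)\<^sup>2) / card V else 0)"
proof -
  define c where "c = real (card L0) + real (card (layer1 V adj L0))"
  define m where "m = real (card (layer_ge2 V adj L0))"
  define n where "n = real (card V)"
  define A where "A = {v \<in> layer_ge2 V adj L0. rs0 \<le> rs V adj L0 v}"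
  have n: "n = c + m" using card_layers[OF graph \<open>L0 \<subseteq> V\<close>] by (simp add: n_def c_def m_def)
  have "0 < n" using graph \<open>V \<noteq> {}\<close> by (simp add: n_def simple_graph_def card_gt_0_iff)
  have "0 \<le> c" "0 \<le> m" "0 \<le> d * c" "d < 1" "e < 1" using assms by (simp_all add: c_def m_def)
  then have "0 \<le> (1 - d) * m" by simp
  then have "0 \<le> lbar" using lbar(1) unfolding m_def by linarith
  have nbar: "(1 - d) * n \<le> c + lbar"
    using lbar(1) \<open>0 \<le> d * c\<close> unfolding n m_def by (simp add: algebra_simps)
  moreover have "0 < (1 - d) * n" using \<open>0 < n\<close> \<open>d < 1\<close> by simp
  ultimately have "0 < c + lbar" by linarith
  have accepted: "A \<noteq> {} \<or> lbar = 0"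
  proof (cases "m = 0")
    case False
    then have "0 < (1 - e) * m" using \<open>0 \<le> m\<close> \<open>e < 1\<close> by simp
    then have "0 < card A" using percentile unfolding A_def m_def by linarith
    then show ?thesis by auto
  qed (use lbar \<open>0 \<le> lbar\<close> m_def in simp)
  have "pmf (sample V adj L0 lbar rs0) x \<le> (if x \<in> L0 \<union> layer1 V adj L0 then 1
      else if x \<in> layer_ge2 V adj L0 then lbar / card A else 0) / (c + lbar)"
    unfolding c_def A_def
    by (rule pmf_sample_le_layers)
      (use assms \<open>0 \<le> lbar\<close> \<open>0 < c + lbar\<close> accepted in \<open>simp_all add: c_def A_def\<close>)
  moreover have "1 / (c + lbar) \<le> (1 + e + d + 2 * (e + d)\<^sup>2) / n"
    using assms \<open>0 < n\<close> nbar by (intro inverse_le_error_factor)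
  moreover have "lbar / card A / (c + lbar) \<le> (1 + e + d + 2 * (e + d)\<^sup>2) / n"
    if "x \<in> layer_ge2 V adj L0"
  proof -
    have "0 < m" using that graph by (auto simp: m_def card_gt_0_iff simple_graph_def layer_ge2_def)
    then show ?thesis
      unfolding n using assms \<open>0 \<le> c\<close> \<open>0 \<le> lbar\<close> by (intro mixture_share_le) (auto simp: A_def m_def)
  qed
  moreover have "0 \<le> (1 + e + d + 2 * (e + d)\<^sup>2) / n" using assms \<open>0 < n\<close> by simp
  moreover have "x \<in> V" if "x \<in> L0 \<union> layer1 V adj L0 \<union> layer_ge2 V adj L0"
    using that \<open>L0 \<subseteq> V\<close> by (auto simp: layer1_def layer_ge2_def)
  ultimately show ?thesis unfolding n_def by (auto split: if_splits)
qed

lemma sample_close_to_uniform: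
  fixes V L0 :: "nat set" and adj and e d lbar rs0 :: real
  assumes "simple_graph V adj" "V \<noteq> {}" "L0 \<subseteq> V" "0 \<le> e" "0 \<le> d" "e + d \<le> 1/2"
    "(1 - d) * card (layer_ge2 V adj L0) \<le> lbar" "lbar \<le> (1 + d) * card (layer_ge2 V adj L0)"
    "0 < rs0" "(1 - e) * card (layer_ge2 V adj L0) \<le> card {v \<in> layer_ge2 V adj L0. rs0 \<le> rs V adj L0 v}"
  shows "tv_dist (sample V adj L0 lbar rs0) (pmf_of_set V) \<le> e + d + 2 * (e + d)\<^sup>2 \<and>
      (\<forall>v. pmf (sample V adj L0 lbar rs0) v \<le> (1 + e + d + 2 * (e + d)\<^sup>2) / card V)"
proof -
  let ?K = "1 + e + d + 2 * (e + d)\<^sup>2"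
  have pmf_le: "pmf (sample V adj L0 lbar rs0) x \<le> (if x \<in> V then ?K / card V else 0)" for x
    using assms by (rule pmf_sample_le)
  have "0 \<le> ?K / card V" using assms by simp
  then have pointwise: "pmf (sample V adj L0 lbar rs0) v \<le> ?K / card V" for v
    using pmf_le[of v] by (simp split: if_splits)
  have "set_pmf (sample V adj L0 lbar rs0) \<subseteq> V"
  proof
    fix x assume "x \<in> set_pmf (sample V adj L0 lbar rs0)"
    then have "0 < pmf (sample V adj L0 lbar rs0) x" by (rule pmf_positive)
    with pmf_le[of x] show "x \<in> V" by (auto split: if_splits)
  qed
  moreover have "finite V" using assms by (simp add: simple_graph_def)
  ultimately have "tv_dist (sample V adj L0 lbar rs0) (pmf_of_set V) \<le> ?K - 1"
    using pointwise by (intro tv_dist_pmf_of_set_le)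
  with pointwise show ?thesis by simp
qed

theorem theorem3p1:
  "\<exists>C c0. c0 > 0 \<and>
     (\<forall>V adj L0 (\<epsilon>::real) (\<delta>::real) lbar rs0.
        simple_graph V adj \<and> V \<noteq> {} \<and> L0 \<subseteq> V \<and>
        \<epsilon> \<ge> 0 \<and> \<delta> \<ge> 0 \<and> \<epsilon> + \<delta> \<le> c0 \<and>
        (1 - \<delta>) * real (card (layer_ge2 V adj L0)) \<le> lbar \<and>
        lbar \<le> (1 + \<delta>) * real (card (layer_ge2 V adj L0)) \<and>
        rs0 > 0 \<and>
        real (card {v \<in> layer_ge2 V adj L0. rs V adj L0 v \<ge> rs0})
          \<ge> (1 - \<epsilon>) * real (card (layer_ge2 V adj L0))
      \<longrightarrow>
        tv_dist (sample V adj L0 lbar rs0) (pmf_of_set V)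
          \<le> \<epsilon> + \<delta> + C * (\<epsilon> + \<delta>)\<^sup>2 \<and>
        (\<forall>v. pmf (sample V adj L0 lbar rs0) v
          \<le> (1 + \<epsilon> + \<delta> + C * (\<epsilon> + \<delta>)\<^sup>2) / real (card V)))"
  by (rule exI[of _ 2], rule exI[of _ "1/2"]) (simp add: sample_close_to_uniform)

end
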